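(* For an integer $g$, let $P_{4,g} = \{(x,y,z)\in\mathbb{R}^3 : 2x-y\ge 0,\ x+y-z\ge 0,\ -x+y+z\ge -1,\ -y+2z\ge -1,\ x+y+z=g,\ x\ge 1,\ y\ge 1,\ z\ge 1\}$. Then: (i) $\#(P_{4,g}\cap\mathbb{Z}^3)$ equals $1,3,4,6,7,9$ for $g=3,4,5,6,7,8$ respectively; (ii) if $g \ge 9$, then $\#(P_{4,g}\cap\mathbb{Z}^3) = \#(T_A(g)\cap\mathbb{Z}^2) + \#(T_B(g)\cap\mathbb{Z}^2) + \#(R(g)\cap\mathbb{Z}^2) - \#(T_C(g)\cap\mathbb{Z}^2)$, where $T_A(g) = \{(x,y)\in\mathbb{R}^2 : 3x+y\ge g,\ x\le \frac{2g+1}{8},\ y\le \frac{g}{2}\}$, $T_B(g) = \{(x,y)\in\mathbb{R}^2 : x+3y\ge g-1,\ x\le \frac{g+1}{2},\ y\le \frac{2g-3}{8}\}$, $R(g) = \{(x,y)\in\mathbb{R}^2 : \frac{2g+1}{8}\le x\le \frac{g+1}{2},\ \frac{2g-3}{8}\le y\le \frac{g}{2}\}$, $T_C(g) = \{(x,y)\in\mathbb{R}^2 : x+y\ge g,\ x\le \frac{g+1}{2},\ y\le \frac{g}{2}\}$. *)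

theory Defs
  imports Main Complex_Main
begin

definition P4 :: "int \<Rightarrow> (real \<times> real \<times> real) set" where
  "P4 g = {(x,y,z). 2*x - y \<ge> 0 \<and> x + y - z \<ge> 0 \<and> -x + y + z \<ge> -1 \<and> -y + 2*z \<ge> -1
                 \<and> x + y + z = real_of_int g \<and> x \<ge> 1 \<and> y \<ge> 1 \<and> z \<ge> 1}"

definition TA :: "int \<Rightarrow> (real \<times> real) set" where
  "TA g = {(x,y). 3*x + y \<ge> real_of_int g \<and> x \<le> (2*real_of_int g + 1)/8 \<and> y \<le> real_of_int g / 2}"

definition TB :: "int \<Rightarrow> (real \<times> real) set" where
  "TB g = {(x,y). x + 3*y \<ge> real_of_int g - 1 \<and> x \<le> (real_of_int g + 1)/2 \<and> y \<le> (2*real_of_int g - 3)/8}"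

definition RR :: "int \<Rightarrow> (real \<times> real) set" where
  "RR g = {(x,y). (2*real_of_int g + 1)/8 \<le> x \<and> x \<le> (real_of_int g + 1)/2
               \<and> (2*real_of_int g - 3)/8 \<le> y \<and> y \<le> real_of_int g / 2}"

definition TC :: "int \<Rightarrow> (real \<times> real) set" where
  "TC g = {(x,y). x + y \<ge> real_of_int g \<and> x \<le> (real_of_int g + 1)/2 \<and> y \<le> real_of_int g / 2}"

definition lattice3 :: "(real \<times> real \<times> real) set \<Rightarrow> nat" where
  "lattice3 S = card {p :: int \<times> int \<times> int. (real_of_int (fst p), real_of_int (fst (snd p)), real_of_int (snd (snd p))) \<in> S}"

definition lattice2 :: "(real \<times> real) set \<Rightarrow> nat" where
  "lattice2 S = card {p :: int \<times> int. (real_of_int (fst p), real_of_int (snd p)) \<in> S}"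

end

theory Submission
  imports Defs
begin

text \<open>Eliminating \<open>y = g - x - z\<close> projects \<open>P\<^sub>4,g\<close> bijectively onto a planar polygon in
  the \<open>(x, z)\<close>-plane. For \<open>g \<ge> 9\<close> the lattice points of that polygon are exactly those of
  \<open>T\<^sub>A \<union> T\<^sub>B \<union> R\<close> outside \<open>T\<^sub>C\<close>, where the first three are disjoint on the lattice and
  contain \<open>T\<^sub>C\<close>; inclusion-exclusion then gives the count.\<close>

definition lattice_points2 :: "(real \<times> real) set \<Rightarrow> (int \<times> int) set" where
  "lattice_points2 S = {p. (real_of_int (fst p), real_of_int (snd p)) \<in> S}"

definition lattice_points3 :: "(real \<times> real \<times> real) set \<Rightarrow> (int \<times> int \<times> int) set" where
  "lattice_points3 S =
     {p. (real_of_int (fst p), real_of_int (fst (snd p)), real_of_int (snd (snd p))) \<in> S}"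

lemma lattice2_eq_card: "lattice2 S = card (lattice_points2 S)"
  by (simp add: lattice2_def lattice_points2_def)

lemma lattice3_eq_card: "lattice3 S = card (lattice_points3 S)"
  by (simp add: lattice3_def lattice_points3_def)

lemma card_Un3_Diff:
  assumes "finite A" "finite B" "finite C"
    and "A \<inter> B = {}" "A \<inter> C = {}" "B \<inter> C = {}" and "D \<subseteq> A \<union> B \<union> C"
  shows "int (card (A \<union> B \<union> C - D)) = int (card A) + int (card B) + int (card C) - int (card D)"
proof -
  have "card (A \<union> B \<union> C) = card A + card B + card C"
    using assms(1-6) by (simp add: card_Un_disjoint Int_Un_distrib2)
  moreover have "card (A \<union> B \<union> C - D) = card (A \<union> B \<union> C) - card D"
    using assms by (meson card_Diff_subset finite_UnI finite_subset)
  moreover have "card D \<le> card (A \<union> B \<union> C)"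
    using assms by (intro card_mono) auto
  ultimately show ?thesis by simp
qed

definition P4_shadow :: "int \<Rightarrow> (int \<times> int) set" where
  "P4_shadow g = {(x, z). g \<le> 3*x + z \<and> 2*z \<le> g \<and> 2*x \<le> g + 1 \<and> g - 1 \<le> x + 3*z
                         \<and> 1 \<le> x \<and> 1 \<le> z \<and> x + z \<le> g - 1}"

lemma P4_lattice_point_iff:
  "(real_of_int x, real_of_int y, real_of_int z) \<in> P4 g \<longleftrightarrow>
     y = g - x - z \<and> (x, z) \<in> P4_shadow g"
proof -
  have "(real_of_int x, real_of_int y, real_of_int z) \<in> P4 g \<longleftrightarrow>
      0 \<le> 2*x - y \<and> 0 \<le> x + y - z \<and> -1 \<le> -x + y + z \<and> -1 \<le> -y + 2*z
      \<and> x + y + z = g \<and> 1 \<le> x \<and> 1 \<le> y \<and> 1 \<le> z"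
    unfolding P4_def by simp linarith
  then show ?thesis
    unfolding P4_shadow_def by auto
qed

lemma lattice3_P4_eq_card_shadow: "lattice3 (P4 g) = card (P4_shadow g)"
proof -
  have "lattice_points3 (P4 g) = (\<lambda>(x, z). (x, g - x - z, z)) ` P4_shadow g"
    by (force simp: lattice_points3_def P4_lattice_point_iff image_iff)
  moreover have "inj_on (\<lambda>(x, z). (x, g - x - z, z)) (P4_shadow g)"
    by (auto simp: inj_on_def)
  ultimately show ?thesis
    by (simp add: lattice3_eq_card card_image)
qed

lemma P4_shadow_code:
  "P4_shadow g = Set.filter (\<lambda>p. p \<in> P4_shadow g) (set [1..g] \<times> set [1..g])"
  by (auto simp: P4_shadow_def)

lemma lattice_points_TA:
  "lattice_points2 (TA g) = {(x, y). g \<le> 3*x + y \<and> 8*x \<le> 2*g + 1 \<and> 2*y \<le> g}"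
proof -
  have "(real_of_int x, real_of_int y) \<in> TA g \<longleftrightarrow>
      real_of_int g \<le> of_int (3*x + y) \<and> of_int (8*x) \<le> real_of_int (2*g + 1)
      \<and> of_int (2*y) \<le> real_of_int g" for x y
    unfolding TA_def by (simp add: field_simps)
  then show ?thesis
    unfolding lattice_points2_def of_int_le_iff by auto
qed

lemma lattice_points_TB:
  "lattice_points2 (TB g) = {(x, y). g - 1 \<le> x + 3*y \<and> 2*x \<le> g + 1 \<and> 8*y \<le> 2*g - 3}"
proof -
  have "(real_of_int x, real_of_int y) \<in> TB g \<longleftrightarrow>
      real_of_int (g - 1) \<le> of_int (x + 3*y) \<and> of_int (2*x) \<le> real_of_int (g + 1)
      \<and> of_int (8*y) \<le> real_of_int (2*g - 3)" for x y
    unfolding TB_def by (simp add: field_simps)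
  then show ?thesis
    unfolding lattice_points2_def of_int_le_iff by auto
qed

lemma lattice_points_RR:
  "lattice_points2 (RR g) =
     {(x, y). 2*g + 1 \<le> 8*x \<and> 2*x \<le> g + 1 \<and> 2*g - 3 \<le> 8*y \<and> 2*y \<le> g}"
proof -
  have "(real_of_int x, real_of_int y) \<in> RR g \<longleftrightarrow>
      real_of_int (2*g + 1) \<le> of_int (8*x) \<and> of_int (2*x) \<le> real_of_int (g + 1)
      \<and> real_of_int (2*g - 3) \<le> of_int (8*y) \<and> of_int (2*y) \<le> real_of_int g" for x y
    unfolding RR_def by (simp add: field_simps)
  then show ?thesis
    unfolding lattice_points2_def of_int_le_iff by auto
qed

lemma lattice_points_TC:
  "lattice_points2 (TC g) = {(x, y). g \<le> x + y \<and> 2*x \<le> g + 1 \<and> 2*y \<le> g}"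
proof -
  have "(real_of_int x, real_of_int y) \<in> TC g \<longleftrightarrow>
      real_of_int g \<le> of_int (x + y) \<and> of_int (2*x) \<le> real_of_int (g + 1)
      \<and> of_int (2*y) \<le> real_of_int g" for x y
    unfolding TC_def by (simp add: field_simps)
  then show ?thesis
    unfolding lattice_points2_def of_int_le_iff by auto
qed

lemma finite_lattice_points_TA_TB_RR_TC:
  assumes "0 \<le> g"
  shows "finite (lattice_points2 (TA g))" "finite (lattice_points2 (TB g))"
    "finite (lattice_points2 (RR g))" "finite (lattice_points2 (TC g))"
proof -
  have box: "lattice_points2 S \<subseteq> {-g..g} \<times> {-g..g}"
    if "S \<in> {TA g, TB g, RR g, TC g}" for S
    using that assms
    by (auto simp: lattice_points_TA lattice_points_TB lattice_points_RR lattice_points_TC)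
  show "finite (lattice_points2 (TA g))" "finite (lattice_points2 (TB g))"
    "finite (lattice_points2 (RR g))" "finite (lattice_points2 (TC g))"
    by (intro finite_subset[OF box] finite_SigmaI finite_atLeastAtMost_int; simp)+
qed

lemma P4_shadow_decomposition:
  assumes "9 \<le> g"
  shows "lattice_points2 (TA g) \<inter> lattice_points2 (TB g) = {}"
    and "lattice_points2 (TA g) \<inter> lattice_points2 (RR g) = {}"
    and "lattice_points2 (TB g) \<inter> lattice_points2 (RR g) = {}"
    and "lattice_points2 (TC g) \<subseteq>
           lattice_points2 (TA g) \<union> lattice_points2 (TB g) \<union> lattice_points2 (RR g)"
    and "lattice_points2 (TA g) \<union> lattice_points2 (TB g) \<union> lattice_points2 (RR g)
           - lattice_points2 (TC g) = P4_shadow g"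
  using assms
  unfolding lattice_points_TA lattice_points_TB lattice_points_RR lattice_points_TC P4_shadow_def
  by (auto; presburger)+

theorem mainTheorem7:
  shows "(lattice3 (P4 3) = 1 \<and> lattice3 (P4 4) = 3 \<and> lattice3 (P4 5) = 4 \<and>
          lattice3 (P4 6) = 6 \<and> lattice3 (P4 7) = 7 \<and> lattice3 (P4 8) = 9) \<and>
         (\<forall>g::int. g \<ge> 9 \<longrightarrow>
           int (lattice3 (P4 g)) = int (lattice2 (TA g)) + int (lattice2 (TB g)) + int (lattice2 (RR g))
                                   - int (lattice2 (TC g)))"
proof (intro conjI allI impI)
  show "lattice3 (P4 3) = 1" "lattice3 (P4 4) = 3" "lattice3 (P4 5) = 4"
    "lattice3 (P4 6) = 6" "lattice3 (P4 7) = 7" "lattice3 (P4 8) = 9"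
    unfolding lattice3_P4_eq_card_shadow
    by (subst P4_shadow_code; simp add: P4_shadow_def; code_simp)+
next
  fix g :: int
  assume "9 \<le> g"
  then show "int (lattice3 (P4 g)) = int (lattice2 (TA g)) + int (lattice2 (TB g))
               + int (lattice2 (RR g)) - int (lattice2 (TC g))"
    unfolding lattice3_P4_eq_card_shadow lattice2_eq_card
    using P4_shadow_decomposition[of g] finite_lattice_points_TA_TB_RR_TC[of g]
      card_Un3_Diff[of "lattice_points2 (TA g)" "lattice_points2 (TB g)" "lattice_points2 (RR g)"
        "lattice_points2 (TC g)"]
    by simp
qed

end
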